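(* Let $p\ge1$. Every two-agent randomized mechanism that is strategyproof, shift and scale invariant, symmetric, and satisfies $\mathbb{P}(f({\bf x})\in[\min(x_1,x_2),\max(x_1,x_2)])=1$ for every profile ${\bf x}$ has approximation ratio at least $\tfrac12\big(2^{1-\frac1p}+1\big)$ with respect to the $L_p$ social cost.
   Context: Two-agent randomized mechanisms map profiles ${\bf x}=(x_1,x_2)$ to distributions on $\mathbb{R}$ (identified with random variables); agent cost is expected distance to the facility; strategyproof means no agent can reduce his expected cost by misreporting. Social cost $sc({\bf x},\pi)=\mathbb{E}_{y\sim\pi}(|x_1-y|^p+|x_2-y|^p)^{1/p}$; approximation ratio $\sup_{\bf x}sc({\bf x},f({\bf x}))/\min_y sc({\bf x},y)$ (with $0/0=1$, $c/0=\infty$ for $c>0$). $m_{\bf x}=(x_1+x_2)/2$. $f$ is shift and scale invariant if for every profile with $x_1\le x_2$ and every $c\in\mathbb{R}$: (1) $f(x_1+c,x_2+c)$ is distributed as $f({\bf x})+c$; (2) if $c\ge0$, $f(cx_1,cx_2)$ is distributed as $c\,f({\bf x})$, and if $c<0$, $f(cx_1,cx_2)$ is distributed as $-c\,f(-x_2,-x_1)$. $f$ is symmetric if $\mathbb{P}(f({\bf x})\ge m_{\bf x}+y)=\mathbb{P}(f({\bf x})\le m_{\bf x}-y)$ for all profiles and all $y\in\mathbb{R}$. *)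

theory Defs
  imports "HOL-Probability.Probability"
begin

type_synonym mechanism = "real \<Rightarrow> real \<Rightarrow> real measure"

definition is_mechanism :: "mechanism \<Rightarrow> bool" where
  "is_mechanism f \<longleftrightarrow> (\<forall>x1 x2. prob_space (f x1 x2) \<and> sets (f x1 x2) = sets borel)"

definition agent_cost :: "real \<Rightarrow> real measure \<Rightarrow> ennreal" where
  "agent_cost a P = (\<integral>\<^sup>+ y. ennreal \<bar>a - y\<bar> \<partial>P)"

definition strategyproof :: "mechanism \<Rightarrow> bool" where
  "strategyproof f \<longleftrightarrow>
     (\<forall>x1 x2 x1'. agent_cost x1 (f x1 x2) \<le> agent_cost x1 (f x1' x2)) \<and>
     (\<forall>x1 x2 x2'. agent_cost x2 (f x1 x2) \<le> agent_cost x2 (f x1 x2'))"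

definition shift_scale_invariant :: "mechanism \<Rightarrow> bool" where
  "shift_scale_invariant f \<longleftrightarrow>
     (\<forall>x1 x2 c. x1 \<le> x2 \<longrightarrow>
        f (x1 + c) (x2 + c) = distr (f x1 x2) borel (\<lambda>y. y + c) \<and>
        (c \<ge> 0 \<longrightarrow> f (c * x1) (c * x2) = distr (f x1 x2) borel (\<lambda>y. c * y)) \<and>
        (c < 0 \<longrightarrow> f (c * x1) (c * x2) = distr (f (- x2) (- x1)) borel (\<lambda>y. - c * y)))"

definition symmetric_mech :: "mechanism \<Rightarrow> bool" where
  "symmetric_mech f \<longleftrightarrow>
     (\<forall>x1 x2 y. measure (f x1 x2) {z. z \<ge> (x1 + x2) / 2 + y}
              = measure (f x1 x2) {z. z \<le> (x1 + x2) / 2 - y})"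

definition interval_supported :: "mechanism \<Rightarrow> bool" where
  "interval_supported f \<longleftrightarrow>
     (\<forall>x1 x2. measure (f x1 x2) {min x1 x2 .. max x1 x2} = 1)"

definition Lp_cost :: "real \<Rightarrow> real \<Rightarrow> real \<Rightarrow> real \<Rightarrow> real" where
  "Lp_cost p x1 x2 y = (\<bar>x1 - y\<bar> powr p + \<bar>x2 - y\<bar> powr p) powr (1 / p)"

definition social_cost :: "real \<Rightarrow> real \<Rightarrow> real \<Rightarrow> real measure \<Rightarrow> ennreal" where
  "social_cost p x1 x2 P = (\<integral>\<^sup>+ y. ennreal (Lp_cost p x1 x2 y) \<partial>P)"

definition opt_cost :: "real \<Rightarrow> real \<Rightarrow> real \<Rightarrow> ennreal" where
  "opt_cost p x1 x2 = (INF y. ennreal (Lp_cost p x1 x2 y))"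

definition ratio_at :: "real \<Rightarrow> mechanism \<Rightarrow> real \<Rightarrow> real \<Rightarrow> ennreal" where
  "ratio_at p f x1 x2 =
     (if opt_cost p x1 x2 = 0 then (if social_cost p x1 x2 (f x1 x2) = 0 then 1 else \<infinity>)
      else social_cost p x1 x2 (f x1 x2) / opt_cost p x1 x2)"

definition approx_ratio :: "real \<Rightarrow> mechanism \<Rightarrow> ennreal" where
  "approx_ratio p f = (SUP x1. SUP x2. ratio_at p f x1 x2)"

end

theory Submission
  imports Defs
begin

text \<open>Let \<open>P = f 0 1\<close>, a distribution on [0, 1]. For \<open>0 < e < 1/2\<close> put \<open>c = 1/(1 - e)\<close>.
By shift and scale invariance, the agent at 0 misreporting \<open>-e c\<close> faces the image of \<open>P\<close>
under \<open>y \<mapsto> c (y - e)\<close>, and the agent at 1 misreporting \<open>c\<close> faces its image under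
\<open>y \<mapsto> c y\<close>. Neither lie may pay off, and the two truthful costs add up to 1; comparing the
costs pointwise forces \<open>P([0, e] \<union> (1 - e, 1]) \<ge> 1/2\<close>, so in the limit \<open>P\<close> puts mass
\<open>m \<ge> 1/2\<close> on the endpoints. There the \<open>L\<^sub>p\<close> cost is at least 1, and everywhere it is at
least the optimum \<open>r \<in> [1/2, 2\<^bsup>1/p\<^esup>/2]\<close>, so the ratio at (0, 1) is at least
\<open>(r + (1 - r) m) / r \<ge> (2\<^bsup>1-1/p\<^esup> + 1) / 2\<close>.\<close>

lemma le_powr_sum_root:
  fixes a b p :: real
  assumes "0 \<le> a" "0 \<le> b" "0 < p"
  shows "a \<le> (a powr p + b powr p) powr (1 / p)"
proof -
  have "a = (a powr p) powr (1 / p)" using assms by (simp add: powr_powr)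
  also have "\<dots> \<le> (a powr p + b powr p) powr (1 / p)"
    by (rule powr_mono2) (use assms in auto)
  finally show ?thesis .
qed

lemma Lp_cost_ge_dist:
  fixes p a b y :: real
  assumes "0 < p"
  shows "\<bar>a - y\<bar> \<le> Lp_cost p a b y" and "\<bar>b - y\<bar> \<le> Lp_cost p a b y"
  using le_powr_sum_root[of "\<bar>a - y\<bar>" "\<bar>b - y\<bar>" p]
    le_powr_sum_root[of "\<bar>b - y\<bar>" "\<bar>a - y\<bar>" p] assms
  unfolding Lp_cost_def by (simp_all add: add.commute)

lemma Lp_cost_midpoint:
  assumes "0 < p"
  shows "Lp_cost p 0 1 (1 / 2) = 2 powr (1 / p) / 2"
proof -
  have "Lp_cost p 0 1 (1 / 2) = 2 powr (1 / p) * ((1 / 2) powr p) powr (1 / p)"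
    unfolding Lp_cost_def by (simp add: powr_mult)
  also have "\<dots> = 2 powr (1 / p) / 2" using assms by (simp add: powr_powr)
  finally show ?thesis .
qed

lemma opt_cost_0_1_bounds:
  assumes "0 < p"
  obtains r where "opt_cost p 0 1 = ennreal r" "1 / 2 \<le> r" "r \<le> 2 powr (1 / p) / 2"
    "\<And>y. r \<le> Lp_cost p 0 1 y"
proof -
  have half_le: "1 / 2 \<le> Lp_cost p 0 1 y" for y
    using Lp_cost_ge_dist[OF assms, where a=0 and b=1 and y=y] by linarith
  have lower: "opt_cost p 0 1 \<le> ennreal (Lp_cost p 0 1 y)" for y
    unfolding opt_cost_def by (rule INF_lower) simp
  have upper: "ennreal (1 / 2) \<le> opt_cost p 0 1"
    unfolding opt_cost_def by (rule INF_greatest) (use half_le ennreal_leI in blast)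
  obtain r where r: "opt_cost p 0 1 = ennreal r" "0 \<le> r"
    using lower[of 0] by (cases "opt_cost p 0 1") (auto simp: top_unique)
  show ?thesis
  proof
    show "opt_cost p 0 1 = ennreal r" by (fact r(1))
    show "1 / 2 \<le> r" using upper r ennreal_le_iff[OF r(2), of "1 / 2"] by simp
    show "r \<le> 2 powr (1 / p) / 2"
      using lower[of "1 / 2"] r Lp_cost_midpoint[OF assms] by simp
    show "r \<le> Lp_cost p 0 1 y" for y
      using lower[of y] r half_le[of y] by simp
  qed
qed

lemma (in prob_space) nn_integral_const_plus_indicator:
  assumes "A \<in> sets M" "0 \<le> c" "0 \<le> a"
  shows "(\<integral>\<^sup>+ y. ennreal (c + a * indicator A y) \<partial>M) = ennreal (c + a * prob A)"
proof -
  have "(\<integral>\<^sup>+ y. ennreal (c + a * indicator A y) \<partial>M)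
      = (\<integral>\<^sup>+ y. ennreal c + ennreal a * indicator A y \<partial>M)"
    using assms by (intro nn_integral_cong) (simp add: ennreal_mult' ennreal_indicator)
  also have "\<dots> = ennreal c + ennreal a * emeasure M A"
    using assms by (simp add: nn_integral_add nn_integral_cmult_indicator emeasure_space_1)
  also have "\<dots> = ennreal (c + a * prob A)"
    using assms by (simp add: emeasure_eq_measure ennreal_mult')
  finally show ?thesis .
qed

lemma agent_cost_distr:
  assumes "g \<in> borel_measurable M"
  shows "agent_cost a (distr M borel g) = (\<integral>\<^sup>+ y. ennreal \<bar>a - g y\<bar> \<partial>M)"
  unfolding agent_cost_def using assms by (simp add: nn_integral_distr)

lemma interval_supported_AE:
  assumes "is_mechanism f" "interval_supported f" "x1 \<le> x2"
  shows "AE y in f x1 x2. x1 \<le> y \<and> y \<le> x2"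
proof -
  interpret prob_space "f x1 x2" using assms(1) by (simp add: is_mechanism_def)
  have "prob {x1..x2} = 1"
    using assms(2,3) unfolding interval_supported_def by (metis max_def min_def)
  then show ?thesis
    using AE_in_set_eq_1[of "{x1..x2}"] assms(1) by (simp add: is_mechanism_def)
qed

lemma agent_cost_add_between:
  assumes "prob_space M" "sets M = sets borel" "AE y in M. a \<le> y \<and> y \<le> b"
  shows "agent_cost a M + agent_cost b M = ennreal (b - a)"
proof -
  interpret prob_space M by fact
  have "agent_cost a M + agent_cost b M = (\<integral>\<^sup>+ y. ennreal \<bar>a - y\<bar> + ennreal \<bar>b - y\<bar> \<partial>M)"
    unfolding agent_cost_def using assms(2) by (simp add: nn_integral_add)
  also have "\<dots> = (\<integral>\<^sup>+ y. ennreal (b - a) \<partial>M)"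
    using assms(3)
  proof (intro nn_integral_cong_AE, eventually_elim)
    case (elim y)
    then have "\<bar>a - y\<bar> + \<bar>b - y\<bar> = b - a" by simp
    then show ?case by (simp add: ennreal_plus[symmetric])
  qed
  also have "\<dots> = ennreal (b - a)" by (simp add: emeasure_space_1)
  finally show ?thesis .
qed

lemma shift_scale_invariant_affine:
  assumes "shift_scale_invariant f" "is_mechanism f" "x1 \<le> x2" "0 \<le> c"
  shows "f (c * x1 + d) (c * x2 + d) = distr (f x1 x2) borel (\<lambda>y. c * y + d)"
proof -
  have sets: "sets (f x1 x2) = sets borel" using assms(2) by (simp add: is_mechanism_def)
  have "f (c * x1 + d) (c * x2 + d) = distr (f (c * x1) (c * x2)) borel (\<lambda>y. y + d)"
    using assms(1,3,4) by (simp add: shift_scale_invariant_def mult_left_mono)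
  also have "\<dots> = distr (distr (f x1 x2) borel (\<lambda>y. c * y)) borel (\<lambda>y. y + d)"
    using assms(1,3,4) by (simp add: shift_scale_invariant_def)
  also have "\<dots> = distr (f x1 x2) borel (\<lambda>y. c * y + d)"
    using sets by (subst distr_distr) (auto simp: comp_def)
  finally show ?thesis .
qed

lemma dist_sum_le_tail_indicator:
  fixes e y :: real
  assumes "0 \<le> y" "y \<le> 1" "e < 1 / 2"
  shows "\<bar>y - e\<bar> + \<bar>1 - e - y\<bar> \<le> 1 - 2 * e + 2 * e * indicator ({..e} \<union> {1 - e<..}) y"
  using assms by (auto simp: indicator_def split: abs_split)

lemma strategyproof_distance_sum_ge:
  assumes "is_mechanism f" "strategyproof f" "shift_scale_invariant f" "interval_supported f"
    and e: "0 \<le> e" "e < 1"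
  shows "ennreal (1 - e) \<le> (\<integral>\<^sup>+ y. ennreal (\<bar>y - e\<bar> + \<bar>1 - e - y\<bar>) \<partial>f 0 1)"
proof -
  define P where "P = f 0 1"
  define c where "c = 1 / (1 - e)"
  have c: "0 < c" and ce: "c * (1 - e) = 1" using e by (simp_all add: c_def)
  interpret prob_space P using assms(1) by (simp add: is_mechanism_def P_def)
  have sets_P: "sets P = sets borel" using assms(1) by (simp add: is_mechanism_def P_def)
  have "AE y in P. 0 \<le> y \<and> y \<le> 1"
    unfolding P_def using interval_supported_AE[OF assms(1,4)] by simp
  then have truthful: "agent_cost 0 P + agent_cost 1 P = 1"
    using agent_cost_add_between[OF prob_space_axioms sets_P] by simp
  have lie1: "f (- (e * c)) 1 = distr P borel (\<lambda>y. c * y - e * c)"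
    using shift_scale_invariant_affine[OF assms(3,1), of 0 1 c "- (e * c)"] c e
    by (simp add: P_def c_def field_simps)
  have lie2: "f 0 c = distr P borel (\<lambda>y. c * y)"
    using shift_scale_invariant_affine[OF assms(3,1), of 0 1 c 0] c by (simp add: P_def)
  have "agent_cost 0 P \<le> agent_cost 0 (f (- (e * c)) 1)"
       "agent_cost 1 P \<le> agent_cost 1 (f 0 c)"
    using assms(2) unfolding strategyproof_def P_def by blast+
  then have "1 \<le> (\<integral>\<^sup>+ y. ennreal \<bar>0 - (c * y - e * c)\<bar> \<partial>P) + (\<integral>\<^sup>+ y. ennreal \<bar>1 - c * y\<bar> \<partial>P)"
    unfolding lie1 lie2 truthful[symmetric] using sets_P
    by (auto simp: agent_cost_distr intro!: add_mono)
  also have "\<dots> = ennreal c * (\<integral>\<^sup>+ y. ennreal (\<bar>y - e\<bar> + \<bar>1 - e - y\<bar>) \<partial>P)"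
  proof -
    from ce have "0 - (c * y - e * c) = c * (e - y)" "1 - c * y = c * (1 - e - y)" for y
      by (simp_all add: algebra_simps)
    then have "ennreal \<bar>0 - (c * y - e * c)\<bar> + ennreal \<bar>1 - c * y\<bar>
        = ennreal c * ennreal (\<bar>y - e\<bar> + \<bar>1 - e - y\<bar>)" for y
      using c by (simp add: abs_mult abs_minus_commute distrib_left ennreal_mult)
    then show ?thesis
      using sets_P by (simp add: nn_integral_add[symmetric] nn_integral_cmult[symmetric])
  qed
  finally have "ennreal (1 - e) * 1
      \<le> ennreal (1 - e) * (ennreal c * (\<integral>\<^sup>+ y. ennreal (\<bar>y - e\<bar> + \<bar>1 - e - y\<bar>) \<partial>P))"
    by (rule mult_left_mono) simp
  also have "\<dots> = (\<integral>\<^sup>+ y. ennreal (\<bar>y - e\<bar> + \<bar>1 - e - y\<bar>) \<partial>P)"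
    using c e ce by (simp add: mult.assoc[symmetric] ennreal_mult[symmetric] mult.commute)
  finally show ?thesis by (simp add: P_def)
qed

lemma strategyproof_tails_ge_half:
  assumes "is_mechanism f" "strategyproof f" "shift_scale_invariant f" "interval_supported f"
    and e: "0 < e" "e < 1 / 2"
  shows "1 / 2 \<le> measure (f 0 1) ({..e} \<union> {1 - e<..})"
proof -
  define P where "P = f 0 1"
  define T where "T = {..e} \<union> {1 - e<..}"
  interpret prob_space P using assms(1) by (simp add: is_mechanism_def P_def)
  have sets_P: "sets P = sets borel" using assms(1) by (simp add: is_mechanism_def P_def)
  have unit: "AE y in P. 0 \<le> y \<and> y \<le> 1"
    unfolding P_def using interval_supported_AE[OF assms(1,4)] by simp
  have "ennreal (1 - e) \<le> (\<integral>\<^sup>+ y. ennreal (\<bar>y - e\<bar> + \<bar>1 - e - y\<bar>) \<partial>P)"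
    using strategyproof_distance_sum_ge[OF assms(1-4)] e by (simp add: P_def)
  also have "\<dots> \<le> (\<integral>\<^sup>+ y. ennreal (1 - 2 * e + 2 * e * indicator T y) \<partial>P)"
    using unit
  proof (intro nn_integral_mono_AE, eventually_elim)
    case (elim y)
    then show ?case
      unfolding T_def using e by (intro ennreal_leI dist_sum_le_tail_indicator) auto
  qed
  also have "\<dots> = ennreal (1 - 2 * e + 2 * e * prob T)"
    using e sets_P by (intro nn_integral_const_plus_indicator) (auto simp: T_def)
  finally have "1 - e \<le> 1 - 2 * e + 2 * e * prob T"
    using e by (subst (asm) ennreal_le_iff) auto
  then have "e * 1 \<le> e * (2 * prob T)" by (simp add: algebra_simps)
  then show ?thesis using e by (simp add: T_def P_def)
qed

lemma (in finite_borel_measure) measure_greaterThan_tendsto_at_left: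
  "((\<lambda>x. measure M {x<..}) \<longlongrightarrow> measure M {a..}) (at_left a)"
proof -
  have "measure M {x<..} = measure M (space M) - cdf M x" for x
    using finite_measure_compl[of "{..x}"] sets_M[of "{..x}"]
    by (simp add: cdf_def2 borel_UNIV Compl_eq_Diff_UNIV[symmetric])
  moreover have "measure M {a..} = measure M (space M) - measure M {..<a}"
    using finite_measure_compl[of "{..<a}"] sets_M[of "{..<a}"]
    by (simp add: borel_UNIV Compl_eq_Diff_UNIV[symmetric])
  ultimately show ?thesis by (simp add: tendsto_diff cdf_at_left)
qed

lemma strategyproof_endpoint_mass:
  assumes "is_mechanism f" "strategyproof f" "shift_scale_invariant f" "interval_supported f"
  shows "1 / 2 \<le> measure (f 0 1) ({..0} \<union> {1..})"
proof -
  define P where "P = f 0 1"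
  interpret real_distribution P
    using assms(1)
    by (simp add: real_distribution_def real_distribution_axioms_def is_mechanism_def P_def)
  define tails where "tails e = measure P {..e} + measure P {1 - e<..}" for e :: real
  have "filterlim (\<lambda>e::real. 1 - e) (at_left 1) (at_right 0)"
    unfolding filterlim_at
    by (auto simp: eventually_at_right_less eventually_at_right_field intro: exI[of _ 1]
        intro!: tendsto_eq_intros)
  then have "(tails \<longlongrightarrow> measure P {..0} + measure P {1..}) (at_right 0)"
    unfolding tails_def using cdf_is_right_cont[of 0]
    by (intro tendsto_add filterlim_compose[OF measure_greaterThan_tendsto_at_left])
      (simp_all add: continuous_within cdf_def)
  moreover have "\<forall>\<^sub>F e in at_right 0. 1 / 2 \<le> tails e"
    unfolding eventually_at_right_field
  proof (intro exI[of _ "1 / 2"] conjI allI impI)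
    fix e :: real assume e: "0 < e" "e < 1 / 2"
    then have "measure P ({..e} \<union> {1 - e<..}) = tails e"
      by (subst finite_measure_Union) (auto simp: tails_def)
    then show "1 / 2 \<le> tails e"
      using strategyproof_tails_ge_half[OF assms, of e] e by (simp add: P_def)
  qed simp
  ultimately have "1 / 2 \<le> measure P {..0} + measure P {1..}"
    by (rule tendsto_lowerbound) simp
  also have "\<dots> = measure P ({..0} \<union> {1..})"
    by (subst finite_measure_Union) auto
  finally show ?thesis unfolding P_def .
qed

lemma social_cost_0_1_ge:
  assumes "prob_space P" "sets P = sets borel" "0 < p" "0 \<le> r" "r \<le> 1"
    and r: "\<And>y. r \<le> Lp_cost p 0 1 y"
  shows "ennreal (r + (1 - r) * measure P ({..0} \<union> {1..})) \<le> social_cost p 0 1 P"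
proof -
  interpret prob_space P by fact
  define E :: "real set" where "E = {..0} \<union> {1..}"
  have "r + (1 - r) * indicator E y \<le> Lp_cost p 0 1 y" for y
  proof (cases "y \<in> E")
    case True
    then have "1 \<le> Lp_cost p 0 1 y"
      using Lp_cost_ge_dist[OF assms(3), where a=0 and b=1 and y=y] by (auto simp: E_def)
    then show ?thesis using True by simp
  qed (simp add: r)
  then have "(\<integral>\<^sup>+ y. ennreal (r + (1 - r) * indicator E y) \<partial>P) \<le> social_cost p 0 1 P"
    unfolding social_cost_def by (intro nn_integral_mono ennreal_leI)
  then show ?thesis
    using assms(2,4,5) by (subst (asm) nn_integral_const_plus_indicator) (auto simp: E_def)
qed

lemma mixed_cost_ratio_ge:
  fixes p r m :: real
  assumes "1 \<le> p" "1 / 2 \<le> r" "r \<le> 2 powr (1 / p) / 2" "1 / 2 \<le> m"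
  shows "(2 powr (1 - 1 / p) + 1) / 2 \<le> (r + (1 - r) * m) / r"
proof -
  define q where "q = 2 powr (1 / p)"
  have q: "0 < q" "q \<le> 2"
    using assms(1) powr_mono[of "1 / p" 1 2] by (auto simp: q_def)
  have "(2 powr (1 - 1 / p) + 1) / 2 * r = r / q + r / 2"
    using q by (simp add: q_def powr_diff field_simps)
  also have "\<dots> \<le> r + (1 - r) * m"
  proof -
    have "r / q \<le> 1 / 2" using assms(3) q by (simp add: q_def field_simps)
    moreover have "(1 - r) / 2 \<le> (1 - r) * m"
      using mult_left_mono[OF assms(4), of "1 - r"] assms(3) q by (simp add: q_def)
    ultimately show ?thesis by argo
  qed
  finally show ?thesis using assms(2) by (simp add: pos_le_divide_eq)
qed

theorem mainTheorem14:
  fixes p :: real and f :: mechanism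
  assumes "p \<ge> 1"
    and "is_mechanism f"
    and "strategyproof f"
    and "shift_scale_invariant f"
    and "symmetric_mech f"
    and "interval_supported f"
  shows "ennreal ((2 powr (1 - 1 / p) + 1) / 2) \<le> approx_ratio p f"
proof -
  define m where "m = measure (f 0 1) ({..0} \<union> {1..})"
  have p: "0 < p" using assms(1) by simp
  obtain r where r: "opt_cost p 0 1 = ennreal r" "1 / 2 \<le> r" "r \<le> 2 powr (1 / p) / 2"
    "\<And>y. r \<le> Lp_cost p 0 1 y"
    using opt_cost_0_1_bounds[OF p] by blast
  have r_le_1: "r \<le> 1"
    using r(3) assms(1) powr_mono[of "1 / p" 1 2] by auto
  have m: "1 / 2 \<le> m"
    using strategyproof_endpoint_mass[OF assms(2,3,4,6)] by (simp add: m_def)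
  have cost: "ennreal (r + (1 - r) * m) \<le> social_cost p 0 1 (f 0 1)"
    using assms(2) r r_le_1 unfolding m_def
    by (intro social_cost_0_1_ge) (auto simp: is_mechanism_def p)
  have "ennreal ((2 powr (1 - 1 / p) + 1) / 2) \<le> ennreal ((r + (1 - r) * m) / r)"
    using mixed_cost_ratio_ge[OF assms(1) r(2,3) m] by (rule ennreal_leI)
  also have "\<dots> \<le> ratio_at p f 0 1"
    using cost r(1,2) r_le_1 m
    by (simp add: ratio_at_def divide_ennreal[symmetric] divide_right_mono_ennreal)
  also have "\<dots> \<le> approx_ratio p f"
    unfolding approx_ratio_def by (meson SUP_upper2 UNIV_I order_refl)
  finally show ?thesis .
qed

end
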